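(* Let $\hat e_1,\hat e_2$ be orthonormal vectors, $R_1=-I+2\hat e_1\otimes\hat e_1$, $R_2=-I+2\hat e_2\otimes\hat e_2$, let $V_1\in\mathbb{R}^{3\times3}$ be symmetric positive definite with eigenvalues $\lambda_1,\lambda_2,\lambda_3$ and orthonormal eigenvectors $\hat v_1,\hat v_2,\hat v_3$, and set $V_2=R_1V_1R_1^T$, $V_3=R_2V_2R_2^T$, $V_4=R_2V_1R_2^T$, assumed pairwise distinct. Consider the four twinning equations $$Q_1V_2-V_1=a_1\otimes\hat n_1,\quad Q_2V_3-V_2=a_2\otimes\hat n_2,\quad Q_3V_4-V_3=a_3\otimes\hat n_3,\quad Q_4V_1-V_4=a_4\otimes\hat n_4,$$ where the pairs $(V_1,V_2),(V_2,V_3),(V_3,V_4),(V_4,V_1)$ are related by the $180^\circ$ rotations about $\hat e_1,\hat e_2,\hat e_1,\hat e_2$ respectively. (a) If $(Q_m,a_m,\hat n_m)$, $m=1,\dots,4$, are the Type-I solutions with respect to these axes and $Q_1Q_2Q_3Q_4=I$, then $\sum_{i=1}^3\lambda_i^{-2}(\hat v_i\cdot\hat e_1)(\hat v_i\cdot\hat e_2)=0$ (i.e. $\hat e_1\cdot V_1^{-2}\hat e_2=0$). (b) If instead they are the Type-II solutions with respect to these axes and $Q_1Q_2Q_3Q_4=I$, then $\sum_{i=1}^3\lambda_i^{2}(\hat v_i\cdot\hat e_1)(\hat v_i\cdot\hat e_2)=0$ (i.e. $\hat e_1\cdot V_1^{2}\hat e_2=0$). (c) Let $V_1=\begin{pmatrix}1&0&0\\0&a&b\\0&b&a\end{pmatrix}$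 with $b>0$, positive definite, $\lambda_1=a-b<1<\lambda_3=a+b$, and let $\hat e_1=\frac1{\sqrt2}(1,-1,0)$, $\hat e_2=\frac1{\sqrt2}(1,1,0)$. If $\lambda_3=\lambda_1/\sqrt{2\lambda_1^2-1}$, then the identity in (a) holds; if $\lambda_3=\sqrt{2-\lambda_1^2}$, then the identity in (b) holds.
   Context: For a symmetric positive-definite $W$ and unit vector $\hat e$ with $W':=(-I+2\hat e\otimes\hat e)W(-I+2\hat e\otimes\hat e)\neq W$, the equation $QW'-W=a\otimes\hat n$ ($Q\in SO(3)$) has two solutions: the Type-I solution $\hat n=\hat e$, $a=2\big(\frac{W^{-1}\hat e}{|W^{-1}\hat e|^2}-W\hat e\big)$, $Q=\big(-I+2\frac{W^{-1}\hat e\otimes W^{-1}\hat e}{|W^{-1}\hat e|^2}\big)(-I+2\hat e\otimes\hat e)$; and the Type-II solution, with $a$ parallel to $W\hat e$ and $\hat n$ parallel to $\hat e-\frac{W^2\hat e}{|W\hat e|^2}$, $Q=\big(-I+2\frac{W\hat e\otimes W\hat e}{|W\hat e|^2}\big)(-I+2\hat e\otimes\hat e)$. "With respect to the axes" means: equation $m$ uses $W=V_m$ (indices mod 4) and $\hat e=\hat e_1$ for $m=1,3$, $\hat e=\hat e_2$ for $m=2,4$. *)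

theory Defs
  imports "HOL-Analysis.Analysis"
begin

type_synonym vec3 = "real^3"
type_synonym mat3 = "real^3^3"

definition outer :: "vec3 \<Rightarrow> vec3 \<Rightarrow> mat3" where
  "outer a b = (\<chi> i j. a $ i * b $ j)"

definition rot180 :: "vec3 \<Rightarrow> mat3" where
  "rot180 e = - mat 1 + 2 *\<^sub>R outer e e"

definition twin_partner :: "mat3 \<Rightarrow> vec3 \<Rightarrow> mat3" where
  "twin_partner W e = rot180 e ** W ** rot180 e"

definition twin_solution :: "mat3 \<Rightarrow> vec3 \<Rightarrow> mat3 \<Rightarrow> vec3 \<Rightarrow> vec3 \<Rightarrow> bool" where
  "twin_solution W e Q a n \<longleftrightarrow>
     rotation_matrix Q \<and> norm n = 1 \<and> Q ** twin_partner W e - W = outer a n"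

definition typeI_solution :: "mat3 \<Rightarrow> vec3 \<Rightarrow> mat3 \<Rightarrow> vec3 \<Rightarrow> vec3 \<Rightarrow> bool" where
  "typeI_solution W e Q a n \<longleftrightarrow>
     twin_solution W e Q a n \<and>
     n = e \<and>
     a = 2 *\<^sub>R ((1 / (norm (matrix_inv W *v e))\<^sup>2) *\<^sub>R (matrix_inv W *v e) - W *v e) \<and>
     Q = (- mat 1 + (2 / (norm (matrix_inv W *v e))\<^sup>2) *\<^sub>R
            outer (matrix_inv W *v e) (matrix_inv W *v e)) ** rot180 e"

definition typeII_solution :: "mat3 \<Rightarrow> vec3 \<Rightarrow> mat3 \<Rightarrow> vec3 \<Rightarrow> vec3 \<Rightarrow> bool" where
  "typeII_solution W e Q a n \<longleftrightarrow>
     twin_solution W e Q a n \<and>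
     (\<exists>c. a = c *\<^sub>R (W *v e)) \<and>
     (\<exists>d. n = d *\<^sub>R (e - (1 / (norm (W *v e))\<^sup>2) *\<^sub>R ((W ** W) *v e))) \<and>
     Q = (- mat 1 + (2 / (norm (W *v e))\<^sup>2) *\<^sub>R outer (W *v e) (W *v e)) ** rot180 e"

definition sym_posdef :: "mat3 \<Rightarrow> bool" where
  "sym_posdef V \<longleftrightarrow> transpose V = V \<and> (\<forall>x. x \<noteq> 0 \<longrightarrow> x \<bullet> (V *v x) > 0)"

end

theory Submission
  imports Defs
begin

(* Both solution types have Q = H(X e) R_e, where H(u) = -I + 2 u\<otimes>u/|u|^2 is the half-turn about
   the axis u and X = W^-1 (Type I) or X = W (Type II). Conjugation by the commuting half-turns
   R_1, R_2 moves everything back to V_1, and the cycle product Q_1 Q_2 Q_3 Q_4 collapses to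
   (H(u) H(w))^2 with u = X e_1, w = X e_2, X = V_1^-1 resp. V_1. As H(u) H(w) is the rotation
   by twice the angle between u and w, its square is the identity only if u and w are orthogonal
   or parallel, and invertibility of X excludes the latter. Hence 0 = X e_1 . X e_2 = e_1 . X^2 e_2,
   which in the eigenbasis of V_1 is the stated sum. In part (c) the inverse of V_1 has the same
   block shape as V_1, so both identities reduce to a scalar equation in a and b. *)

definition half_turn :: "vec3 \<Rightarrow> mat3" where
  "half_turn u = - mat 1 + (2 / (norm u)\<^sup>2) *\<^sub>R outer u u"

definition twin_rotation :: "mat3 \<Rightarrow> vec3 \<Rightarrow> mat3" where
  "twin_rotation X e = half_turn (X *v e) ** rot180 e"

lemma outer_mult_vec: "outer a b *v x = (b \<bullet> x) *\<^sub>R a"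
  by (simp add: vec_eq_iff matrix_vector_mult_def outer_def inner_vec_def sum_distrib_left mult_ac)

lemma uminus_matrix_vector_mult: "(- A) *v x = - (A *v x)" for A :: "'a::ring_1^'n^'m"
  by (simp add: vec_eq_iff matrix_vector_mult_def sum_negf)

lemma matrix_vector_mult_uminus_right: "A *v (- x) = - (A *v x)" for A :: "'a::ring_1^'n^'m"
  by (simp add: vec_eq_iff matrix_vector_mult_def sum_negf)

lemma inner_transpose_matrix_vector: "(transpose A *v x) \<bullet> y = x \<bullet> (A *v y)"
  for A :: "real^'n^'m"
  by (simp add: dot_lmul_matrix)

lemma inner_mult_self_symmetric:
  "transpose M = M \<Longrightarrow> x \<bullet> ((M ** M) *v y) = (M *v x) \<bullet> (M *v y)" for M :: "real^'n^'n"
  by (metis inner_transpose_matrix_vector matrix_vector_mul_assoc)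

lemma half_turn_mult_vec: "half_turn u *v x = (2 * (u \<bullet> x) / (norm u)\<^sup>2) *\<^sub>R u - x"
  unfolding half_turn_def matrix_vector_mult_add_rdistrib uminus_matrix_vector_mult
  by (simp add: outer_mult_vec flip: scaleR_matrix_vector_assoc)

lemma rot180_eq_half_turn: "norm e = 1 \<Longrightarrow> rot180 e = half_turn e"
  by (simp add: rot180_def half_turn_def)

lemma half_turn_uminus [simp]: "half_turn (- u) = half_turn u"
  by (simp add: half_turn_def outer_def vec_eq_iff)

lemma transpose_half_turn [simp]: "transpose (half_turn u) = half_turn u"
  by (simp add: half_turn_def outer_def vec_eq_iff transpose_def mat_def mult.commute)

lemma half_turn_axis: "u \<noteq> 0 \<Longrightarrow> half_turn u *v u = u"
  by (simp add: half_turn_mult_vec power2_norm_eq_inner scaleR_2)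

lemma half_turn_orthogonal: "u \<bullet> x = 0 \<Longrightarrow> half_turn u *v x = - x"
  by (simp add: half_turn_mult_vec)

lemma half_turn_involutive:
  assumes "u \<noteq> 0" shows "half_turn u ** half_turn u = mat 1"
proof -
  have "half_turn u *v (half_turn u *v x) = x" for x
  proof -
    have "u \<bullet> (half_turn u *v x) = u \<bullet> x"
      using assms by (simp add: half_turn_mult_vec inner_diff_right power2_norm_eq_inner)
    then show ?thesis by (simp add: half_turn_mult_vec)
  qed
  then show ?thesis by (simp add: matrix_eq flip: matrix_vector_mul_assoc)
qed

lemma orthogonal_matrix_half_turn: "u \<noteq> 0 \<Longrightarrow> orthogonal_matrix (half_turn u)"
  by (simp add: orthogonal_matrix_def half_turn_involutive)

lemma orthogonal_matrix_rot180: "norm e = 1 \<Longrightarrow> orthogonal_matrix (rot180 e)"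
  by (auto simp: rot180_eq_half_turn intro: orthogonal_matrix_half_turn)

lemma half_turn_fixed_imp_parallel:
  assumes "half_turn u *v x = x" shows "x = ((u \<bullet> x) / (norm u)\<^sup>2) *\<^sub>R u"
proof -
  have "(2 * (u \<bullet> x) / (norm u)\<^sup>2) *\<^sub>R u = 2 *\<^sub>R x"
    using assms by (simp add: half_turn_mult_vec scaleR_2 algebra_simps)
  then show ?thesis by (metis (no_types, lifting) scaleR_scaleR times_divide_eq_right
      mult_2 nonzero_mult_div_cancel_left scaleR_cancel_left zero_neq_numeral)
qed

lemma half_turns_commute:
  assumes "u \<bullet> w = 0" shows "half_turn u ** half_turn w = half_turn w ** half_turn u"
proof -
  have "w \<bullet> u = 0" using assms by (simp add: inner_commute)
  then have "half_turn u *v (half_turn w *v x) = half_turn w *v (half_turn u *v x)" for x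
    using assms by (simp add: half_turn_mult_vec inner_diff_right algebra_simps)
  then show ?thesis by (simp add: matrix_eq flip: matrix_vector_mul_assoc)
qed

lemma half_turn_conj:
  assumes C: "orthogonal_matrix C"
  shows "half_turn (C *v u) = C ** half_turn u ** transpose C"
proof -
  have CCt: "C ** transpose C = mat 1" and CtC: "transpose C ** C = mat 1"
    using C by (auto simp: orthogonal_matrix_def)
  have inner_C: "(C *v u) \<bullet> y = u \<bullet> (transpose C *v y)" for y
    by (metis inner_transpose_matrix_vector transpose_transpose)
  have "norm (C *v u) = norm u"
    by (simp add: norm_eq_sqrt_inner inner_C matrix_vector_mul_assoc CtC)
  moreover have "C *v (transpose C *v y) = y" for y
    by (simp add: matrix_vector_mul_assoc CCt del: transpose_matrix_vector)
  ultimately have "half_turn (C *v u) *v y = C *v (half_turn u *v (transpose C *v y))" for y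
    by (simp add: half_turn_mult_vec inner_C matrix_vector_mult_diff_distrib
        matrix_vector_mult_scaleR del: transpose_matrix_vector)
  then show ?thesis by (simp add: matrix_eq flip: matrix_vector_mul_assoc)
qed

lemma half_turn_product_involutive_imp_orthogonal_or_parallel:
  assumes "u \<noteq> 0"
    and "(half_turn u ** half_turn w) ** (half_turn u ** half_turn w) = mat 1"
  shows "u \<bullet> w = 0 \<or> (\<exists>c. u = c *\<^sub>R w)"
proof (cases "u \<bullet> w = 0")
  case False
  then have "w \<noteq> 0" by auto
  let ?A = "half_turn u" and ?B = "half_turn w"
  have "?B ** ?A ** ?B = ?A ** ((?A ** ?B) ** (?A ** ?B))"
    by (simp add: matrix_mul_assoc half_turn_involutive[OF \<open>u \<noteq> 0\<close>])
  also have "\<dots> = ?A" using assms(2) by simp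
  finally have "?B *v (?A *v (?B *v w)) = ?A *v w"
    by (metis matrix_vector_mul_assoc)
  then have "?B *v (?A *v w) = ?A *v w"
    by (simp add: half_turn_axis[OF \<open>w \<noteq> 0\<close>])
  then obtain c where "?A *v w = c *\<^sub>R w"
    using half_turn_fixed_imp_parallel by metis
  moreover define k where "k = 2 * (u \<bullet> w) / (norm u)\<^sup>2"
  ultimately have "k *\<^sub>R u = (c + 1) *\<^sub>R w"
    by (simp add: half_turn_mult_vec algebra_simps)
  moreover have "k \<noteq> 0" using False \<open>u \<noteq> 0\<close> by (simp add: k_def)
  ultimately have "u = (inverse k * (c + 1)) *\<^sub>R w"
    by (metis scaleR_scaleR left_inverse scaleR_one)
  then show ?thesis by blast
qed simp

lemma matrix_inv_right: "invertible A \<Longrightarrow> A ** matrix_inv A = mat 1"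
  and matrix_inv_left: "invertible A \<Longrightarrow> matrix_inv A ** A = mat 1"
  unfolding invertible_def matrix_inv_def by (metis (mono_tags, lifting) someI_ex)+

lemma matrix_inv_unique:
  fixes A :: "'a::field^'n^'n"
  assumes "A ** B = mat 1" shows "matrix_inv A = B"
proof -
  have "invertible A" using assms invertible_right_inverse by blast
  have "matrix_inv A = matrix_inv A ** (A ** B)" by (simp add: assms)
  also have "\<dots> = (matrix_inv A ** A) ** B" by (simp add: matrix_mul_assoc)
  also have "\<dots> = B" by (simp add: matrix_inv_left \<open>invertible A\<close>)
  finally show ?thesis .
qed

lemma invertible_matrix_inv: "invertible A \<Longrightarrow> invertible (matrix_inv A)"
  by (metis invertible_def matrix_inv_left matrix_inv_right)

lemma symmetric_matrix_inv:
  fixes A :: "'a::field^'n^'n"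
  assumes "invertible A" "transpose A = A" shows "transpose (matrix_inv A) = matrix_inv A"
proof -
  have "A ** transpose (matrix_inv A) = transpose (matrix_inv A ** A)"
    using assms(2) by (simp add: matrix_transpose_mul)
  also have "\<dots> = mat 1" by (simp add: matrix_inv_left assms(1) transpose_mat)
  finally show ?thesis by (rule sym[OF matrix_inv_unique])
qed

lemma matrix_inv_orthogonal_conj:
  fixes C V :: "real^'n^'n"
  assumes "orthogonal_matrix C" "invertible V"
  shows "matrix_inv (C ** V ** transpose C) = C ** matrix_inv V ** transpose C"
proof (rule matrix_inv_unique)
  have "C ** V ** transpose C ** (C ** matrix_inv V ** transpose C)
      = C ** V ** (transpose C ** C) ** matrix_inv V ** transpose C"
    by (simp add: matrix_mul_assoc)
  also have "\<dots> = C ** (V ** matrix_inv V) ** transpose C"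
    using assms(1) by (simp add: orthogonal_matrix_def matrix_mul_assoc)
  also have "\<dots> = mat 1"
    using assms by (simp add: matrix_inv_right orthogonal_matrix_def)
  finally show "C ** V ** transpose C ** (C ** matrix_inv V ** transpose C) = mat 1" .
qed

lemma sym_posdef_invertible: "sym_posdef V \<Longrightarrow> invertible V"
  unfolding sym_posdef_def
  by (metis inner_zero_right less_irrefl invertible_left_inverse matrix_left_invertible_ker)

lemma twin_rotation_conj:
  assumes "orthogonal_matrix C" "transpose C *v e = e \<or> transpose C *v e = - e"
  shows "twin_rotation (C ** X ** transpose C) e
    = C ** half_turn (X *v e) ** transpose C ** rot180 e"
proof -
  have "half_turn ((C ** X ** transpose C) *v e) = half_turn (C *v (X *v e))"
    using assms(2) by (auto simp: matrix_vector_mult_uminus_right simp flip: matrix_vector_mul_assoc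
        simp del: transpose_matrix_vector)
  then show ?thesis by (simp add: twin_rotation_def half_turn_conj[OF assms(1)])
qed

lemma twin_rotation_cycle:
  fixes X :: mat3
  assumes "norm e1 = 1" "norm e2 = 1" "e1 \<bullet> e2 = 0"
  shows "twin_rotation X e1
           ** twin_rotation (rot180 e1 ** X ** transpose (rot180 e1)) e2
           ** twin_rotation (rot180 e2 ** (rot180 e1 ** X ** transpose (rot180 e1))
                ** transpose (rot180 e2)) e1
           ** twin_rotation (rot180 e2 ** X ** transpose (rot180 e2)) e2
         = (half_turn (X *v e1) ** half_turn (X *v e2)) ** (half_turn (X *v e1) ** half_turn (X *v e2))"
proof -
  have e1: "e1 \<noteq> 0" and e2: "e2 \<noteq> 0" and e21: "e2 \<bullet> e1 = 0"
    using assms(1-3) by (auto simp: inner_commute)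
  define R1 R2 A B where "R1 = half_turn e1" and "R2 = half_turn e2"
    and "A = half_turn (X *v e1)" and "B = half_turn (X *v e2)"
  have rot: "rot180 e1 = R1" "rot180 e2 = R2"
    using assms(1,2) by (simp_all add: R1_def R2_def rot180_eq_half_turn)
  have R11: "R1 ** R1 = mat 1" and R22: "R2 ** R2 = mat 1"
    by (simp_all add: R1_def R2_def half_turn_involutive e1 e2)
  have R11': "R1 ** (R1 ** M) = M" for M :: mat3
    by (metis R11 matrix_mul_assoc matrix_mul_lid)
  have R22': "R2 ** (R2 ** M) = M" for M :: mat3
    by (metis R22 matrix_mul_assoc matrix_mul_lid)
  have R12: "R1 ** R2 = R2 ** R1" unfolding R1_def R2_def by (rule half_turns_commute[OF assms(3)])
  have orth: "orthogonal_matrix R1" "orthogonal_matrix (R2 ** R1)" "orthogonal_matrix R2"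
    by (simp_all add: R1_def R2_def orthogonal_matrix_half_turn orthogonal_matrix_mul e1 e2)
  have "transpose R1 *v e2 = - e2" "transpose (R2 ** R1) *v e1 = - e1" "transpose R2 *v e2 = e2"
    by (simp_all add: R1_def R2_def matrix_transpose_mul half_turn_orthogonal half_turn_axis
        assms(3) e21 e1 e2 matrix_vector_mult_uminus_right
        flip: matrix_vector_mul_assoc del: transpose_matrix_vector)
  note conj = twin_rotation_conj[OF orth(1) disjI2[OF this(1)]]
    twin_rotation_conj[OF orth(2) disjI2[OF this(2)]]
    twin_rotation_conj[OF orth(3) disjI1[OF this(3)]]
  have "R2 ** (R1 ** X ** transpose R1) ** transpose R2 = (R2 ** R1) ** X ** transpose (R2 ** R1)"
    by (simp add: matrix_transpose_mul matrix_mul_assoc)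
  then have "twin_rotation X e1 ** twin_rotation (R1 ** X ** transpose R1) e2
           ** twin_rotation (R2 ** (R1 ** X ** transpose R1) ** transpose R2) e1
           ** twin_rotation (R2 ** X ** transpose R2) e2
      = (A ** R1) ** (R1 ** B ** R1 ** R2) ** (R2 ** R1 ** A ** (R1 ** R2) ** R1)
          ** (R2 ** B ** R2 ** R2)"
    using conj by (simp add: twin_rotation_def rot A_def B_def R1_def R2_def matrix_transpose_mul)
  also have "\<dots> = A ** B ** A ** (R1 ** R2 ** R1 ** R2) ** B"
    by (simp add: R11 R22 R11' R22' flip: matrix_mul_assoc)
  also have "R1 ** R2 ** R1 ** R2 = mat 1"
    by (metis R11 R12 R22 matrix_mul_assoc matrix_mul_lid)
  finally show ?thesis by (simp add: rot A_def B_def matrix_mul_assoc)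
qed

lemma twin_rotation_cycle_eq_id_imp_orthogonal:
  fixes X :: mat3
  assumes e: "norm e1 = 1" "norm e2 = 1" "e1 \<bullet> e2 = 0" and "invertible X"
    and cycle: "twin_rotation X e1
           ** twin_rotation (rot180 e1 ** X ** transpose (rot180 e1)) e2
           ** twin_rotation (rot180 e2 ** (rot180 e1 ** X ** transpose (rot180 e1))
                ** transpose (rot180 e2)) e1
           ** twin_rotation (rot180 e2 ** X ** transpose (rot180 e2)) e2 = mat 1"
  shows "(X *v e1) \<bullet> (X *v e2) = 0"
proof -
  have inj: "inj ((*v) X)" by (rule inj_matrix_vector_mult[OF \<open>invertible X\<close>])
  then have "X *v e1 \<noteq> 0" using e(1) by (metis matrix_vector_mult_0_right injD norm_zero zero_neq_one)
  moreover have "(half_turn (X *v e1) ** half_turn (X *v e2)) ** (half_turn (X *v e1) ** half_turn (X *v e2))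
      = mat 1"
    using cycle by (simp add: twin_rotation_cycle[OF e])
  ultimately consider "(X *v e1) \<bullet> (X *v e2) = 0" | c where "X *v e1 = c *\<^sub>R (X *v e2)"
    using half_turn_product_involutive_imp_orthogonal_or_parallel by blast
  then show ?thesis
  proof cases
    case 2
    then have "X *v e1 = X *v (c *\<^sub>R e2)" by (simp add: matrix_vector_mult_scaleR)
    then have "e1 = c *\<^sub>R e2" by (rule injD[OF inj])
    then have "e1 \<bullet> e1 = 0" using e(3) by simp
    then show ?thesis using e(1) by simp
  qed
qed

lemma typeI_solution_rotation: "typeI_solution W e Q a n \<Longrightarrow> Q = twin_rotation (matrix_inv W) e"
  by (simp add: typeI_solution_def twin_rotation_def half_turn_def)

lemma typeII_solution_rotation: "typeII_solution W e Q a n \<Longrightarrow> Q = twin_rotation W e"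
  by (simp add: typeII_solution_def twin_rotation_def half_turn_def)

lemma typeI_cycle_imp_orthogonal:
  assumes e: "norm e1 = 1" "norm e2 = 1" "e1 \<bullet> e2 = 0" and "sym_posdef V1"
    and V2: "V2 = rot180 e1 ** V1 ** transpose (rot180 e1)"
    and V3: "V3 = rot180 e2 ** V2 ** transpose (rot180 e2)"
    and V4: "V4 = rot180 e2 ** V1 ** transpose (rot180 e2)"
    and "typeI_solution V1 e1 Q1 a1 n1" "typeI_solution V2 e2 Q2 a2 n2"
      "typeI_solution V3 e1 Q3 a3 n3" "typeI_solution V4 e2 Q4 a4 n4"
    and "Q1 ** Q2 ** Q3 ** Q4 = mat 1"
  shows "e1 \<bullet> ((matrix_inv V1 ** matrix_inv V1) *v e2) = 0"
proof -
  let ?R1 = "rot180 e1" and ?R2 = "rot180 e2" and ?X = "matrix_inv V1"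
  have V1: "invertible V1" "transpose V1 = V1"
    using \<open>sym_posdef V1\<close> by (simp_all add: sym_posdef_invertible sym_posdef_def)
  have R: "orthogonal_matrix ?R1" "orthogonal_matrix ?R2" "orthogonal_matrix (?R2 ** ?R1)"
    using e by (simp_all add: orthogonal_matrix_rot180 orthogonal_matrix_mul)
  have "V3 = (?R2 ** ?R1) ** V1 ** transpose (?R2 ** ?R1)"
    by (simp add: V3 V2 matrix_transpose_mul matrix_mul_assoc)
  then have "matrix_inv V3 = (?R2 ** ?R1) ** ?X ** transpose (?R2 ** ?R1)"
    by (simp only: matrix_inv_orthogonal_conj[OF R(3) V1(1)])
  also have "\<dots> = ?R2 ** (?R1 ** ?X ** transpose ?R1) ** transpose ?R2"
    by (simp add: matrix_transpose_mul matrix_mul_assoc)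
  finally have "matrix_inv V3 = ?R2 ** (?R1 ** ?X ** transpose ?R1) ** transpose ?R2" .
  moreover have "matrix_inv V2 = ?R1 ** ?X ** transpose ?R1" "matrix_inv V4 = ?R2 ** ?X ** transpose ?R2"
    by (simp_all add: V2 V4 matrix_inv_orthogonal_conj R V1)
  ultimately have "(?X *v e1) \<bullet> (?X *v e2) = 0"
    using assms(8-12) typeI_solution_rotation
    by (intro twin_rotation_cycle_eq_id_imp_orthogonal[OF e invertible_matrix_inv[OF V1(1)]]) metis
  then show ?thesis
    by (simp add: inner_mult_self_symmetric symmetric_matrix_inv V1)
qed

lemma typeII_cycle_imp_orthogonal:
  assumes e: "norm e1 = 1" "norm e2 = 1" "e1 \<bullet> e2 = 0" and "sym_posdef V1"
    and V2: "V2 = rot180 e1 ** V1 ** transpose (rot180 e1)"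
    and V3: "V3 = rot180 e2 ** V2 ** transpose (rot180 e2)"
    and V4: "V4 = rot180 e2 ** V1 ** transpose (rot180 e2)"
    and "typeII_solution V1 e1 Q1 a1 n1" "typeII_solution V2 e2 Q2 a2 n2"
      "typeII_solution V3 e1 Q3 a3 n3" "typeII_solution V4 e2 Q4 a4 n4"
    and "Q1 ** Q2 ** Q3 ** Q4 = mat 1"
  shows "e1 \<bullet> ((V1 ** V1) *v e2) = 0"
proof -
  have V1: "invertible V1" "transpose V1 = V1"
    using \<open>sym_posdef V1\<close> by (simp_all add: sym_posdef_invertible sym_posdef_def)
  have "(V1 *v e1) \<bullet> (V1 *v e2) = 0"
    using assms(8-12) typeII_solution_rotation V2 V3 V4
    by (intro twin_rotation_cycle_eq_id_imp_orthogonal[OF e V1(1)]) metis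
  then show ?thesis by (simp add: inner_mult_self_symmetric V1)
qed

lemma orthonormal_expansion:
  fixes v :: "'i \<Rightarrow> 'a::euclidean_space"
  assumes "finite I" "card I = DIM('a)"
    and onb: "\<forall>i\<in>I. \<forall>j\<in>I. v i \<bullet> v j = (if i = j then 1 else 0)"
  shows "x = (\<Sum>i\<in>I. (v i \<bullet> x) *\<^sub>R v i)"
proof -
  define z where "z = x - (\<Sum>i\<in>I. (v i \<bullet> x) *\<^sub>R v i)"
  have vz: "v i \<bullet> z = 0" if "i \<in> I" for i
  proof -
    have "v i \<bullet> (\<Sum>j\<in>I. (v j \<bullet> x) *\<^sub>R v j) = (\<Sum>j\<in>I. if i = j then v j \<bullet> x else 0)"
      using that onb by (auto simp: inner_sum_right intro: sum.cong)
    then show ?thesis using that \<open>finite I\<close> by (simp add: z_def inner_diff_right)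
  qed
  have "inj_on v I"
    using onb by (metis inj_onI zero_neq_one)
  then have "card (v ` I) = DIM('a)" by (simp add: card_image assms(2))
  moreover have "independent (v ` I)"
    using onb by (intro pairwise_orthogonal_independent)
      (auto simp: pairwise_def orthogonal_def, metis zero_neq_one inner_zero_left)
  ultimately have "z \<in> span (v ` I)"
    using card_ge_dim_independent[of "v ` I" UNIV] by auto
  moreover have "\<forall>y\<in>v ` I. orthogonal z y"
    using vz by (auto simp: orthogonal_def inner_commute)
  ultimately have "orthogonal z z" using orthogonal_to_span by blast
  then have "z = 0" by (simp add: orthogonal_self)
  then show ?thesis by (simp add: z_def)
qed

lemma inner_orthonormal_expansion:
  fixes v :: "'i \<Rightarrow> 'a::euclidean_space"
  assumes "finite I" "card I = DIM('a)"
    and "\<forall>i\<in>I. \<forall>j\<in>I. v i \<bullet> v j = (if i = j then 1 else 0)"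
  shows "x \<bullet> y = (\<Sum>i\<in>I. (v i \<bullet> x) * (v i \<bullet> y))"
proof -
  have "x \<bullet> y = (\<Sum>i\<in>I. (v i \<bullet> x) *\<^sub>R v i) \<bullet> y"
    using orthonormal_expansion[OF assms, of x] by (rule arg_cong)
  then show ?thesis by (simp add: inner_sum_left)
qed

lemma inner_eigenbasis_expansion:
  fixes M :: "real^'n^'n" and v :: "'i \<Rightarrow> real^'n"
  assumes "finite I" "card I = CARD('n)"
    and onb: "\<forall>i\<in>I. \<forall>j\<in>I. v i \<bullet> v j = (if i = j then 1 else 0)"
    and "transpose M = M" and eig: "\<forall>i\<in>I. M *v v i = \<mu> i *\<^sub>R v i"
  shows "x \<bullet> (M *v y) = (\<Sum>i\<in>I. \<mu> i * (v i \<bullet> x) * (v i \<bullet> y))"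
proof -
  have "x \<bullet> (M *v y) = (\<Sum>i\<in>I. (v i \<bullet> x) * (v i \<bullet> (M *v y)))"
    using assms(1,2) onb by (intro inner_orthonormal_expansion) simp_all
  also have "\<dots> = (\<Sum>i\<in>I. \<mu> i * (v i \<bullet> x) * (v i \<bullet> y))"
  proof (rule sum.cong)
    fix i assume "i \<in> I"
    then have "v i \<bullet> (M *v y) = \<mu> i * (v i \<bullet> y)"
      using eig inner_transpose_matrix_vector[of M "v i" y] \<open>transpose M = M\<close> by simp
    then show "(v i \<bullet> x) * (v i \<bullet> (M *v y)) = \<mu> i * (v i \<bullet> x) * (v i \<bullet> y)" by simp
  qed simp
  finally show ?thesis .
qed

lemma eigenvector_matrix_inv:
  fixes M :: "real^'n^'n"
  assumes "invertible M" "M *v x = c *\<^sub>R x" "x \<noteq> 0"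
  shows "matrix_inv M *v x = inverse c *\<^sub>R x"
proof -
  have x: "matrix_inv M *v (M *v x) = x"
    by (simp add: matrix_vector_mul_assoc matrix_inv_left assms(1))
  then have "c \<noteq> 0" using assms(2,3) by auto
  have "matrix_inv M *v x = inverse c *\<^sub>R (c *\<^sub>R (matrix_inv M *v x))"
    using \<open>c \<noteq> 0\<close> by simp
  also have "\<dots> = inverse c *\<^sub>R x"
    using x assms(2) by (simp add: matrix_vector_mult_scaleR)
  finally show ?thesis .
qed

lemma eigenvector_matrix_square:
  "M *v x = c *\<^sub>R x \<Longrightarrow> (M ** M) *v x = c\<^sup>2 *\<^sub>R x" for M :: "real^'n^'n"
  by (simp add: power2_eq_square matrix_vector_mult_scaleR flip: matrix_vector_mul_assoc)

lemma inner_square_eigen_expansion: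
  fixes M :: "real^'n^'n" and v :: "'i \<Rightarrow> real^'n"
  assumes "transpose M = M" "finite I" "card I = CARD('n)"
    and "\<forall>i\<in>I. \<forall>j\<in>I. v i \<bullet> v j = (if i = j then 1 else 0)"
    and "\<forall>i\<in>I. M *v v i = lam i *\<^sub>R v i"
  shows "x \<bullet> ((M ** M) *v y) = (\<Sum>i\<in>I. (lam i)\<^sup>2 * (v i \<bullet> x) * (v i \<bullet> y))"
  using assms by (intro inner_eigenbasis_expansion)
    (simp_all add: matrix_transpose_mul eigenvector_matrix_square)

lemma inner_inverse_square_eigen_expansion:
  fixes M :: "real^'n^'n" and v :: "'i \<Rightarrow> real^'n"
  assumes "invertible M" "transpose M = M" "finite I" "card I = CARD('n)"
    and onb: "\<forall>i\<in>I. \<forall>j\<in>I. v i \<bullet> v j = (if i = j then 1 else 0)"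
    and eig: "\<forall>i\<in>I. M *v v i = lam i *\<^sub>R v i"
  shows "x \<bullet> ((matrix_inv M ** matrix_inv M) *v y)
    = (\<Sum>i\<in>I. lam i powi (-2) * (v i \<bullet> x) * (v i \<bullet> y))"
proof (rule inner_eigenbasis_expansion[OF assms(3,4) onb])
  show "transpose (matrix_inv M ** matrix_inv M) = matrix_inv M ** matrix_inv M"
    by (simp add: matrix_transpose_mul symmetric_matrix_inv assms(1,2))
  have "v i \<noteq> 0" if "i \<in> I" for i using onb that by force
  then show "\<forall>i\<in>I. (matrix_inv M ** matrix_inv M) *v v i = lam i powi (-2) *\<^sub>R v i"
    using eig by (simp add: eigenvector_matrix_square eigenvector_matrix_inv assms(1)
        power_int_minus power_inverse)
qed

definition sym_block_matrix :: "real \<Rightarrow> real \<Rightarrow> mat3" where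
  "sym_block_matrix p q = vector [vector [1, 0, 0], vector [0, p, q], vector [0, q, p]]"

lemma sym_block_matrix_mult_vec:
  "sym_block_matrix p q *v vector [x, y, z] = vector [x, p * y + q * z, q * y + p * z]"
  by (simp add: sym_block_matrix_def vec_eq_iff forall_3 matrix_vector_mult_def sum_3)

lemma sym_block_matrix_mult:
  "sym_block_matrix p q ** sym_block_matrix r s = sym_block_matrix (p * r + q * s) (p * s + q * r)"
  by (simp add: sym_block_matrix_def vec_eq_iff forall_3 matrix_matrix_mult_def sum_3 algebra_simps)

lemma sym_block_matrix_id: "sym_block_matrix 1 0 = mat 1"
  by (simp add: sym_block_matrix_def vec_eq_iff forall_3 mat_def)

lemma sym_block_matrix_square:
  "sym_block_matrix p q ** sym_block_matrix p q = sym_block_matrix (p\<^sup>2 + q\<^sup>2) (2 * p * q)"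
  by (simp add: sym_block_matrix_mult power2_eq_square mult_ac)

lemma matrix_inv_sym_block_matrix:
  assumes "p\<^sup>2 \<noteq> q\<^sup>2"
  shows "matrix_inv (sym_block_matrix p q)
    = sym_block_matrix (p / (p\<^sup>2 - q\<^sup>2)) (- q / (p\<^sup>2 - q\<^sup>2))"
proof (rule matrix_inv_unique)
  define D where "D = p\<^sup>2 - q\<^sup>2"
  have "p * (p / D) + q * (- q / D) = (p * p - q * q) / D"
    by (simp add: diff_divide_distrib)
  also have "\<dots> = 1" using assms by (simp add: D_def power2_eq_square)
  finally have "p * (p / D) + q * (- q / D) = 1" .
  moreover have "p * (- q / D) + q * (p / D) = 0" by simp
  ultimately show
    "sym_block_matrix p q ** sym_block_matrix (p / (p\<^sup>2 - q\<^sup>2)) (- q / (p\<^sup>2 - q\<^sup>2)) = mat 1"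
    by (simp add: sym_block_matrix_mult sym_block_matrix_id flip: D_def)
qed

lemma inner_sym_block_matrix_diagonals:
  "((1 / sqrt 2) *\<^sub>R vector [1, -1, 0]) \<bullet> (sym_block_matrix a b *v ((1 / sqrt 2) *\<^sub>R vector [1, 1, 0]))
    = (1 - a) / 2"
proof -
  have "(vector [1, -1, 0] :: vec3) \<bullet> (sym_block_matrix a b *v vector [1, 1, 0]) = 1 - a"
    by (simp add: sym_block_matrix_mult_vec inner_vec_def sum_3)
  then show ?thesis by (simp add: matrix_vector_mult_scaleR)
qed

lemma sym_posdef_sym_block_matrix_imp_less: "sym_posdef (sym_block_matrix p q) \<Longrightarrow> q < p"
proof -
  assume "sym_posdef (sym_block_matrix p q)"
  then have "(vector [0, 1, -1] :: vec3) \<bullet> (sym_block_matrix p q *v vector [0, 1, -1]) > 0"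
    unfolding sym_posdef_def by (metis vector_3(2) zero_index zero_neq_one)
  then show "q < p" by (simp add: sym_block_matrix_mult_vec inner_vec_def sum_3)
qed

lemma sym_block_matrix_typeI_identity:
  assumes "sym_posdef (sym_block_matrix p q)" "1 < p + q"
    and "p + q = (p - q) / sqrt (2 * (p - q)\<^sup>2 - 1)"
  shows "((1 / sqrt 2) *\<^sub>R vector [1, -1, 0]) \<bullet>
      ((matrix_inv (sym_block_matrix p q) ** matrix_inv (sym_block_matrix p q))
        *v ((1 / sqrt 2) *\<^sub>R vector [1, 1, 0])) = 0"
proof -
  define D where "D = p\<^sup>2 - q\<^sup>2"
  (* Needed: as sqrt is odd on the reals, the hypothesis on p + q also has solutions with p < q,
     for which the identity fails. *)
  have "q < p" using assms(1) by (rule sym_posdef_sym_block_matrix_imp_less)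
  then have "0 < D" using assms(2) by (simp add: D_def power2_eq_square square_diff_square_factored)
  have inv_square: "matrix_inv (sym_block_matrix p q) ** matrix_inv (sym_block_matrix p q)
      = sym_block_matrix ((p\<^sup>2 + q\<^sup>2) / D\<^sup>2) (- (2 * p * q / D\<^sup>2))"
    using \<open>0 < D\<close> unfolding D_def
    by (simp add: matrix_inv_sym_block_matrix sym_block_matrix_square power_divide add_divide_distrib
        power2_eq_square)
  have "sqrt (2 * (p - q)\<^sup>2 - 1) > 0"
    using assms(2,3) \<open>q < p\<close> by (metis divide_less_0_iff divide_eq_0_iff less_trans zero_less_one
        linorder_neqE_linordered_idom not_less_iff_gr_or_eq diff_gt_0_iff_gt)
  moreover have "(p + q) * sqrt (2 * (p - q)\<^sup>2 - 1) = p - q"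
    using assms(3) calculation by (simp add: field_simps)
  ultimately have "(p + q)\<^sup>2 * (2 * (p - q)\<^sup>2 - 1) = (p - q)\<^sup>2"
    by (metis power_mult_distrib real_sqrt_gt_0_iff real_sqrt_pow2 less_imp_le)
  then have "p\<^sup>2 + q\<^sup>2 = D\<^sup>2" by (simp add: D_def power2_eq_square algebra_simps)
  then show ?thesis
    using \<open>0 < D\<close> unfolding inv_square inner_sym_block_matrix_diagonals by simp
qed

lemma sym_block_matrix_typeII_identity:
  assumes "1 < p + q" and "p + q = sqrt (2 - (p - q)\<^sup>2)"
  shows "((1 / sqrt 2) *\<^sub>R vector [1, -1, 0]) \<bullet>
      ((sym_block_matrix p q ** sym_block_matrix p q) *v ((1 / sqrt 2) *\<^sub>R vector [1, 1, 0])) = 0"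
proof -
  have "(p + q)\<^sup>2 = 2 - (p - q)\<^sup>2"
    using assms by (metis less_trans zero_less_one real_sqrt_gt_0_iff real_sqrt_pow2 less_imp_le
        real_sqrt_lt_0_iff not_less)
  then have "p\<^sup>2 + q\<^sup>2 = 1" by (simp add: power2_eq_square algebra_simps)
  then show ?thesis unfolding sym_block_matrix_square inner_sym_block_matrix_diagonals by simp
qed

theorem mainTheorem10:
  fixes e1 e2 :: vec3 and V1 V2 V3 V4 :: mat3
    and lam :: "nat \<Rightarrow> real" and v :: "nat \<Rightarrow> vec3"
    and Q a n :: "nat \<Rightarrow> _"
  assumes orth: "norm e1 = 1" "norm e2 = 1" "e1 \<bullet> e2 = 0"
    and spd: "sym_posdef V1"
    and eig: "\<forall>i\<in>{1..3}. V1 *v v i = lam i *\<^sub>R v i"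
    and onb: "\<forall>i\<in>{1..3}. \<forall>j\<in>{1..3}. v i \<bullet> v j = (if i = j then 1 else 0)"
    and V2: "V2 = rot180 e1 ** V1 ** transpose (rot180 e1)"
    and V3: "V3 = rot180 e2 ** V2 ** transpose (rot180 e2)"
    and V4: "V4 = rot180 e2 ** V1 ** transpose (rot180 e2)"
    and dist: "V1 \<noteq> V2" "V1 \<noteq> V3" "V1 \<noteq> V4" "V2 \<noteq> V3" "V2 \<noteq> V4" "V3 \<noteq> V4"
  shows
    "((typeI_solution V1 e1 (Q 1) (a 1) (n 1) \<and> typeI_solution V2 e2 (Q 2) (a 2) (n 2) \<and>
       typeI_solution V3 e1 (Q 3) (a 3) (n 3) \<and> typeI_solution V4 e2 (Q 4) (a 4) (n 4) \<and>
       Q 1 ** Q 2 ** Q 3 ** Q 4 = mat 1)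
      \<longrightarrow> (\<Sum>i=1..3. (lam i) powi (-2) * (v i \<bullet> e1) * (v i \<bullet> e2)) = 0
          \<and> e1 \<bullet> ((matrix_inv V1 ** matrix_inv V1) *v e2) = 0)
   \<and> ((typeII_solution V1 e1 (Q 1) (a 1) (n 1) \<and> typeII_solution V2 e2 (Q 2) (a 2) (n 2) \<and>
       typeII_solution V3 e1 (Q 3) (a 3) (n 3) \<and> typeII_solution V4 e2 (Q 4) (a 4) (n 4) \<and>
       Q 1 ** Q 2 ** Q 3 ** Q 4 = mat 1)
      \<longrightarrow> (\<Sum>i=1..3. (lam i)\<^sup>2 * (v i \<bullet> e1) * (v i \<bullet> e2)) = 0
          \<and> e1 \<bullet> ((V1 ** V1) *v e2) = 0)
   \<and> (\<forall>(p::real) (q::real) (W::mat3) (f1::vec3) (f2::vec3).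
        W = vector [vector [1, 0, 0], vector [0, p, q], vector [0, q, p]] \<and>
        q > 0 \<and> sym_posdef W \<and> p - q < 1 \<and> 1 < p + q \<and>
        f1 = (1 / sqrt 2) *\<^sub>R vector [1, -1, 0] \<and> f2 = (1 / sqrt 2) *\<^sub>R vector [1, 1, 0]
      \<longrightarrow> (p + q = (p - q) / sqrt (2 * (p - q)\<^sup>2 - 1)
             \<longrightarrow> f1 \<bullet> ((matrix_inv W ** matrix_inv W) *v f2) = 0)
        \<and> (p + q = sqrt (2 - (p - q)\<^sup>2)
             \<longrightarrow> f1 \<bullet> ((W ** W) *v f2) = 0))"
proof -
  have V1: "invertible V1" "transpose V1 = V1"
    using spd by (simp_all add: sym_posdef_invertible sym_posdef_def)
  have card: "card {1..3::nat} = CARD(3)" by simp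
  note expansions =
    inner_inverse_square_eigen_expansion[OF V1 finite_atLeastAtMost card onb eig, of e1 e2]
    inner_square_eigen_expansion[OF V1(2) finite_atLeastAtMost card onb eig, of e1 e2]
  note typeI = typeI_cycle_imp_orthogonal[OF orth spd V2 V3 V4]
  note typeII = typeII_cycle_imp_orthogonal[OF orth spd V2 V3 V4]
  note example = sym_block_matrix_typeI_identity sym_block_matrix_typeII_identity
  show ?thesis
    using typeI typeII expansions example[unfolded sym_block_matrix_def] by auto
qed

end
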